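(* Let $q\in\mathbb{C}^{\ast}$ not a root of unity, $R=\mathbb{C}[[z]]$, $F=\mathbb{C}((z))$. Let $V$ be an object of ${\cal B}^{al}_q$, let $L\subset V$ be a $\xi$-invariant $R$-lattice (not necessarily $\xi^{-1}$-invariant), let $\overline L=L/zL$ with the $\mathbb{C}$-linear operator induced by $\xi$, and let $\overline P\subset\overline L$ be a $\xi$-invariant subspace such that for every eigenvalue $\alpha$ of $\xi$ on $\overline P$ and every integer $n\neq0$, the number $q^n\alpha$ is not an eigenvalue of $\xi$ on $\overline L$. Then the embedding $\overline P\hookrightarrow\overline L$ has a $\mathbb{C}[\xi]$-equivariant lifting $\overline P\to L$, i.e. a $\mathbb{C}$-linear map commuting with $\xi$ whose composition with $L\to L/zL$ is the inclusion.
   Context: ${\cal B}^{al}_q$ is the category of finite-dimensional $F$-vector spaces $V$ equipped with a semi-linear automorphism $\xi$, $\xi(f(z)v)=f(qz)\xi(v)$. An $R$-lattice in $V$ is a finitely generated $R$-submodule spanning $V$ over $F$. Since $\xi(zL)=qz\xi(L)\subset zL$, $\xi$ induces a $\mathbb{C}$-linear operator on $L/zL$. *)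

theory Defs
  imports "HOL-Computational_Algebra.Formal_Laurent_Series"
begin

text \<open>F = C((z)) is the type complex fls; R = C[[z]] is embedded as fps_to_fls ` UNIV.\<close>

text \<open>The substitution f(z) |-> f(q z) on Laurent series: coefficient n is multiplied by q^n.\<close>
lift_definition fls_qsubst :: "complex \<Rightarrow> complex fls \<Rightarrow> complex fls"
  is "\<lambda>q f n. q powi n * f n"
  by (auto elim!: eventually_mono)

definition qdiff_module ::
  "complex \<Rightarrow> (complex fls \<Rightarrow> 'v::ab_group_add \<Rightarrow> 'v) \<Rightarrow> ('v \<Rightarrow> 'v) \<Rightarrow> bool" where
  "qdiff_module q scale xi \<longleftrightarrow>
     Vector_Spaces.vector_space scale \<and>
     (\<exists>B. finite B \<and> module.span scale B = UNIV) \<and>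
     bij xi \<and>
     (\<forall>x y. xi (x + y) = xi x + xi y) \<and>
     (\<forall>f v. xi (scale f v) = scale (fls_qsubst q f) (xi v))"

definition R_lattice :: "(complex fls \<Rightarrow> 'v::ab_group_add \<Rightarrow> 'v) \<Rightarrow> 'v set \<Rightarrow> bool" where
  "R_lattice scale L \<longleftrightarrow>
     (\<exists>G. finite G \<and> G \<subseteq> L \<and>
        L = {v. \<exists>r. v = (\<Sum>g\<in>G. scale (fps_to_fls (r g)) g)}) \<and>
     module.span scale L = UNIV"

abbreviation cscale :: "(complex fls \<Rightarrow> 'v \<Rightarrow> 'v) \<Rightarrow> complex \<Rightarrow> 'v \<Rightarrow> 'v" where
  "cscale scale c v \<equiv> scale (fls_const c) v"

abbreviation zmul :: "(complex fls \<Rightarrow> 'v \<Rightarrow> 'v) \<Rightarrow> 'v set \<Rightarrow> 'v set" where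
  "zmul scale L \<equiv> scale fls_X ` L"

text \<open>alpha is an eigenvalue of the operator induced by xi on P/zL (P a xi-invariant
  subspace of L containing zL, i.e. a subspace of L/zL):
  some x in P with x not in zL and xi x - alpha x in zL.\<close>
definition quot_eigenvalue ::
  "(complex fls \<Rightarrow> 'v::ab_group_add \<Rightarrow> 'v) \<Rightarrow> ('v \<Rightarrow> 'v) \<Rightarrow> 'v set \<Rightarrow> 'v set \<Rightarrow> complex \<Rightarrow> bool" where
  "quot_eigenvalue scale xi L P \<alpha> \<longleftrightarrow>
     (\<exists>x\<in>P. x \<notin> zmul scale L \<and> xi x - cscale scale \<alpha> x \<in> zmul scale L)"

end

theory Submission
  imports Defs "HOL-Computational_Algebra.Fundamental_Theorem_Algebra"
begin

(* Let f be a polynomial of least degree with f(xi) P \<subseteq> zL; every root of f is then an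
   eigenvalue of xi on P/zL. For such a root a and k \<ge> 1, xi - a acts on z^k L / z^(k+1) L as
   q^k (xi - q^-k a) acts on L/zL, which is bijective by the nonresonance hypothesis (injective,
   hence surjective because L/zL is finite-dimensional). Since L is z-adically separated and
   complete, xi - a, and therefore f(xi), is bijective on zL. The lifting sends x \<in> P to x - y,
   where y is the unique element of zL with f(xi) y = f(xi) x. *)

unbundle fps_syntax

lemma (in vector_space) nontrivial_linear_relation:
  assumes "finite T" "finite I" "card T < card I" "v ` I \<subseteq> span T"
  shows "\<exists>c. (\<exists>i\<in>I. c i \<noteq> 0) \<and> (\<Sum>i\<in>I. c i *s v i) = 0"
proof (cases "inj_on v I")
  case True
  have "\<not> independent (v ` I)"
    using independent_span_bound[OF assms(1) _ assms(4)] assms(3) card_image[OF True] by linarith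
  then obtain u where u: "\<exists>x\<in>v ` I. u x \<noteq> 0" "(\<Sum>x\<in>v ` I. u x *s x) = 0"
    using dependent_finite[OF finite_imageI[OF assms(2)]] by auto
  have "(\<Sum>i\<in>I. u (v i) *s v i) = 0"
    using u(2) sum.reindex[OF True, of "\<lambda>x. u x *s x"] by simp
  then show ?thesis using u(1) by (intro exI[of _ "\<lambda>i. u (v i)"]) auto
next
  case False
  then obtain i j where ij: "i \<in> I" "j \<in> I" "i \<noteq> j" "v i = v j"
    by (auto simp: inj_on_def)
  define c where "c k = (if k = i then (1::'a) else if k = j then - 1 else 0)" for k
  have "(\<Sum>k\<in>I. c k *s v k) = (\<Sum>k\<in>{i, j}. c k *s v k)"
    using ij assms(2) by (intro sum.mono_neutral_right) (auto simp: c_def)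
  also have "\<dots> = 0"
    using ij by (simp add: c_def)
  finally show ?thesis using ij(1) by (intro exI[of _ c]) (auto simp: c_def)
qed

lemma fls_const_add: "fls_const (a + b) = fls_const a + (fls_const b :: 'a::monoid_add fls)"
  by (rule fls_eqI) simp

lemma fls_qsubst_nth [simp]: "fls_qsubst q f $$ n = q powi n * f $$ n"
  by (simp add: fls_qsubst.rep_eq)

lemma fls_qsubst_const [simp]: "fls_qsubst q (fls_const c) = fls_const c"
  by (rule fls_eqI) simp

lemma fls_qsubst_X_power [simp]: "fls_qsubst q (fls_X ^ k) = fls_const (q ^ k) * fls_X ^ k"
  by (rule fls_eqI) simp

lemma fps_to_fls_sum: "fps_to_fls (sum f A) = (\<Sum>a\<in>A. fps_to_fls (f a))"
  by (induction A rule: infinite_finite_induct) auto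

lemma fls_eq_0_if_X_power_dvd:
  assumes "\<And>k. \<exists>F. c = fls_X ^ k * fps_to_fls F"
  shows "c = (0 :: 'a::comm_semiring_1 fls)"
proof (rule fls_zero_eqI)
  fix n :: int
  obtain F where F: "c = fps_to_fls (fps_X ^ Suc (nat n) * F)"
    using assms[of "Suc (nat n)"] by (auto simp: fls_times_fps_to_fls fps_to_fls_power)
  show "c $$ n = 0"
  proof (cases "n < 0")
    case False
    have "(fps_X ^ Suc (nat n) * F) $ nat n = 0"
      by (simp only: fps_X_power_mult_nth) simp
    then show ?thesis using False F by simp
  qed (use F in simp)
qed

lemma fls_common_denominator:
  fixes h :: "'i \<Rightarrow> 'a::comm_ring_1 fls"
  assumes "finite A"
  shows "\<exists>N. \<forall>a\<in>A. \<exists>p. fls_X ^ N * h a = fps_to_fls p"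
proof
  define N where "N = (\<Sum>a\<in>A. nat (- fls_subdegree (h a)))"
  show "\<forall>a\<in>A. \<exists>p. fls_X ^ N * h a = fps_to_fls p"
  proof
    fix a assume a: "a \<in> A"
    have "nat (- fls_subdegree (h a)) \<le> N"
      unfolding N_def using assms a by (intro member_le_sum) auto
    then have "fls_subdegree (fls_X ^ N * h a) \<ge> 0" if "h a \<noteq> 0"
      using that by (simp add: fls_X_power_times_conv_shift)
    then show "\<exists>p. fls_X ^ N * h a = fps_to_fls p"
      by (metis fls_regpart_to_fls_trivial mult_zero_right fps_to_fls_eq_0_iff)
  qed
qed

lemma fps_tail_sums:
  fixes f :: "nat \<Rightarrow> 'a::comm_semiring_1 fps"
  shows "\<exists>T. \<forall>m. T m = f m + fps_X * T (Suc m)"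
proof (intro exI allI)
  \<comment> \<open>the tail sums \<open>T m = (\<Sum>k\<ge>m. X^(k - m) * f k)\<close>\<close>
  define T where "T m = Abs_fps (\<lambda>n. \<Sum>i\<le>n. f (i + m) $ (n - i))" for m
  show "T m = f m + fps_X * T (Suc m)" for m
  proof (rule fps_ext)
    fix n
    show "T m $ n = (f m + fps_X * T (Suc m)) $ n"
    proof (cases n)
      case (Suc n')
      have "(fps_X * T (Suc m)) $ n = (\<Sum>i\<le>n'. f (Suc i + m) $ (n' - i))"
        using fps_X_power_mult_nth[of 1 "T (Suc m)" n] by (simp add: Suc T_def)
      then show ?thesis
        unfolding T_def Suc fps_nth_Abs_fps sum.atMost_Suc_shift by simp
    qed (simp add: T_def)
  qed
qed

section \<open>The z-adic filtration of a lattice\<close>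

locale fg_lattice = vs: Vector_Spaces.vector_space scale
  for scale :: "complex fls \<Rightarrow> 'v::ab_group_add \<Rightarrow> 'v" +
  fixes G L :: "'v set"
  assumes finite_G: "finite G"
    and L_char: "L = {v. \<exists>r. v = (\<Sum>g\<in>G. scale (fps_to_fls (r g)) g)}"
begin

sublocale R: module "\<lambda>f. scale (fps_to_fls f)"
  by unfold_locales
    (simp_all add: vs.scale_right_distrib vs.scale_left_distrib vs.scale_scale fls_times_fps_to_fls)

sublocale C: Vector_Spaces.vector_space "cscale scale"
  by unfold_locales (simp_all add: vs.scale_right_distrib vs.scale_left_distrib fls_const_add vs.scale_scale)

lemma C_subspace_if_R_subspace: "R.subspace S \<Longrightarrow> C.subspace S"
  using R.subspace_scale[of S _ "fps_const c" for c] by (simp add: R.subspace_def C.subspace_def)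

lemma L_eq_span: "L = R.span G"
  by (simp add: L_char R.span_finite[OF finite_G] image_def)

definition zL :: "nat \<Rightarrow> 'v set" where
  "zL k = scale (fls_X ^ k) ` L"

lemma zL_0 [simp]: "zL 0 = L"
  by (simp add: zL_def)

lemma zmul_eq_zL: "zmul scale L = zL 1"
  by (simp add: zL_def)

lemma R_subspace_zL: "R.subspace (zL k)"
proof (rule R.subspaceI)
  have L: "R.subspace L"
    by (simp add: L_eq_span)
  show "0 \<in> zL k"
    using R.subspace_0[OF L] vs.scale_zero_right unfolding zL_def by (metis image_eqI)
  show "x + y \<in> zL k" if "x \<in> zL k" "y \<in> zL k" for x y
    using that R.subspace_add[OF L] unfolding zL_def by (auto simp flip: vs.scale_right_distrib)
  show "scale (fps_to_fls c) x \<in> zL k" if x: "x \<in> zL k" for c x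
  proof -
    obtain y where y: "y \<in> L" "x = scale (fls_X ^ k) y"
      using x by (auto simp: zL_def)
    then have "scale (fps_to_fls c) x = scale (fls_X ^ k) (scale (fps_to_fls c) y)"
      by (simp add: vs.scale_scale mult.commute)
    then show ?thesis
      using R.subspace_scale[OF L y(1)] unfolding zL_def by blast
  qed
qed

lemmas C_subspace_zL = C_subspace_if_R_subspace[OF R_subspace_zL]

lemma C_subspace_L: "C.subspace L"
  using C_subspace_zL[of 0] by simp

lemma scale_X_power_mem_zL_iff: "scale (fls_X ^ k) x \<in> zL (k + m) \<longleftrightarrow> x \<in> zL m"
proof -
  have "scale (fls_X ^ k) x = scale (fls_X ^ (k + m)) y \<longleftrightarrow> x = scale (fls_X ^ m) y" for y
    by (metis vs.scale_left_imp_eq vs.scale_scale fls_X_nonzero power_not_zero power_add)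
  then show ?thesis
    by (simp add: zL_def image_iff)
qed

lemma zL_Suc_subset: "zL (Suc k) \<subseteq> zL k"
proof
  fix x assume "x \<in> zL (Suc k)"
  then obtain y where y: "y \<in> L" "x = scale (fls_X ^ Suc k) y"
    by (auto simp: zL_def)
  then have "x = scale (fls_X ^ k) (scale fls_X y)"
    by (simp add: vs.scale_scale mult.commute)
  moreover have "scale fls_X y \<in> L"
    using R.subspace_scale[of L y fps_X] y(1) by (simp add: L_eq_span)
  ultimately show "x \<in> zL k"
    unfolding zL_def by blast
qed

lemma zL_antimono: "k \<le> m \<Longrightarrow> zL m \<subseteq> zL k"
  by (induction m rule: dec_induct) (use zL_Suc_subset in blast)+

lemma zL_subset_L: "zL k \<subseteq> L"
  using zL_antimono[of 0 k] by simp

lemma L_mod_zL_in_C_span: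
  assumes "x \<in> L"
  shows "\<exists>w\<in>C.span G. x - w \<in> zL 1"
proof -
  obtain r where r: "x = (\<Sum>g\<in>G. scale (fps_to_fls (r g)) g)"
    using assms by (auto simp: L_char)
  define w where "w = (\<Sum>g\<in>G. cscale scale (r g $ 0) g)"
  have "r g - fps_const (r g $ 0) = fps_X * fps_shift 1 (r g)" for g
    by (rule fps_ext) (auto simp: fps_X_power_mult_nth[where k=1, simplified])
  then have "fps_to_fls (r g) - fls_const (r g $ 0) = fls_X * fps_to_fls (fps_shift 1 (r g))" for g
    by (metis fps_to_fls_minus fps_const_to_fls fls_times_fps_to_fls fps_X_to_fls)
  then have "x - w = scale fls_X (\<Sum>g\<in>G. scale (fps_to_fls (fps_shift 1 (r g))) g)"
    unfolding r w_def
    by (simp add: vs.scale_sum_right vs.scale_scale flip: sum_subtractf vs.scale_left_diff_distrib)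
  moreover have "(\<Sum>g\<in>G. scale (fps_to_fls (fps_shift 1 (r g))) g) \<in> L"
    by (auto simp: L_char)
  ultimately have "x - w \<in> zL 1"
    unfolding zL_def by simp
  moreover have "w \<in> C.span G"
    unfolding w_def by (intro C.span_sum C.span_scale C.span_base)
  ultimately show ?thesis by blast
qed

lemma zL_separated:
  assumes "\<And>k. v \<in> zL k"
  shows "v = 0"
proof (rule ccontr)
  assume "v \<noteq> 0"
  obtain B where B: "vs.independent B" "UNIV \<subseteq> vs.span B"
    using vs.basis_exists[of UNIV] by blast
  let ?rep = "vs.representation B"
  have span: "u \<in> vs.span B" for u
    using B(2) by blast
  have "\<exists>b. ?rep v b \<noteq> 0"
    using vs.sum_nonzero_representation_eq[OF B(1) span[of v]] \<open>v \<noteq> 0\<close>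
    by (metis (mono_tags) empty_Collect_eq sum.empty)
  then obtain b where b: "?rep v b \<noteq> 0" ..
  obtain N where N: "\<forall>g\<in>G. \<exists>p. fls_X ^ N * ?rep g b = fps_to_fls p"
    using fls_common_denominator[OF finite_G, of "\<lambda>g. ?rep g b"] by blast
  \<comment> \<open>After clearing these denominators, the \<open>b\<close>-coordinate of \<open>v\<close> is divisible by every \<open>z^k\<close>.\<close>
  then obtain p where p: "\<And>g. g \<in> G \<Longrightarrow> fls_X ^ N * ?rep g b = fps_to_fls (p g)"
    by metis
  have "\<exists>F. fls_X ^ N * ?rep v b = fls_X ^ k * fps_to_fls F" for k
  proof -
    obtain r where r: "v = scale (fls_X ^ k) (\<Sum>g\<in>G. scale (fps_to_fls (r g)) g)"
      using assms[of k] unfolding zL_def by (auto simp: L_char)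
    then have "?rep v b = fls_X ^ k * (\<Sum>g\<in>G. fps_to_fls (r g) * ?rep g b)"
      by (simp add: vs.representation_scale[OF B(1) span] vs.representation_sum[OF B(1) span])
    then have "fls_X ^ N * ?rep v b = fls_X ^ k * (\<Sum>g\<in>G. fps_to_fls (r g) * (fls_X ^ N * ?rep g b))"
      by (simp add: sum_distrib_left mult_ac)
    also have "\<dots> = fls_X ^ k * fps_to_fls (\<Sum>g\<in>G. r g * p g)"
      by (simp add: p fls_times_fps_to_fls fps_to_fls_sum)
    finally show ?thesis ..
  qed
  then have "fls_X ^ N * ?rep v b = 0"
    by (rule fls_eq_0_if_X_power_dvd)
  then show False
    using b by simp
qed

lemma zL_complete:
  assumes "\<And>k. u k \<in> zL k"
  shows "\<exists>x\<in>L. \<forall>m. x - (\<Sum>k<m. u k) \<in> zL m"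
proof -
  have "\<exists>r. u k = scale (fls_X ^ k) (\<Sum>g\<in>G. scale (fps_to_fls (r g)) g)" for k
    using assms[of k] unfolding zL_def by (auto simp: L_char)
  then obtain r where r: "\<And>k. u k = scale (fls_X ^ k) (\<Sum>g\<in>G. scale (fps_to_fls (r k g)) g)"
    by metis
  have "\<exists>T. \<forall>m. T m = r m g + fps_X * T (Suc m)" for g
    by (rule fps_tail_sums)
  then obtain T where T: "\<And>g m. T g m = r m g + fps_X * T g (Suc m)"
    by metis
  define y where "y m = (\<Sum>g\<in>G. scale (fps_to_fls (T g m)) g)" for m
  have y_L: "y m \<in> L" for m
    by (auto simp: y_def L_char)
  have y_Suc: "y m = (\<Sum>g\<in>G. scale (fps_to_fls (r m g)) g) + scale fls_X (y (Suc m))" for m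
  proof -
    have "y m = (\<Sum>g\<in>G. scale (fps_to_fls (r m g + fps_X * T g (Suc m))) g)"
      by (simp only: y_def T[symmetric])
    then show ?thesis
      by (simp add: y_def vs.scale_left_distrib vs.scale_sum_right vs.scale_scale
          fls_times_fps_to_fls sum.distrib)
  qed
  have "y 0 - (\<Sum>k<m. u k) = scale (fls_X ^ m) (y m)" for m
  proof (induction m)
    case (Suc m)
    then show ?case
      by (simp add: r y_Suc[of m] vs.scale_right_distrib vs.scale_scale mult.commute
          flip: diff_diff_eq)
  qed simp
  then show ?thesis
    using y_L unfolding zL_def by blast
qed

lemma inj_on_zL_if_graded_inj:
  assumes T: "additive T"
    and graded: "\<And>k u. 1 \<le> k \<Longrightarrow> u \<in> zL k \<Longrightarrow> T u \<in> zL (Suc k) \<Longrightarrow> u \<in> zL (Suc k)"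
  shows "inj_on T (zL 1)"
proof (rule inj_onI)
  fix y y' assume y: "y \<in> zL 1" "y' \<in> zL 1" "T y = T y'"
  have T_diff: "T (y - y') \<in> zL k" for k
    using y(3) additive.diff[OF T] R.subspace_0[OF R_subspace_zL] by simp
  have "y - y' \<in> zL (Suc k)" for k
  proof (induction k)
    case 0
    then show ?case
      using R.subspace_diff[OF R_subspace_zL y(1,2)] by simp
  next
    case (Suc k)
    then show ?case
      using graded[OF _ Suc T_diff] by simp
  qed
  then have "y - y' = 0"
    using zL_Suc_subset by (intro zL_separated) blast
  then show "y = y'"
    by simp
qed

lemma zL_subset_image_if_graded_surj:
  assumes T: "additive T"
    and T_zL: "\<And>k. T ` zL k \<subseteq> zL k"
    and graded: "\<And>k e. 1 \<le> k \<Longrightarrow> e \<in> zL k \<Longrightarrow> \<exists>u\<in>zL k. e - T u \<in> zL (Suc k)"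
  shows "zL 1 \<subseteq> T ` zL 1"
proof
  fix y assume y: "y \<in> zL 1"
  define step where "step k e = (SOME u. u \<in> zL k \<and> e - T u \<in> zL (Suc k))" for k e
  have step: "step k e \<in> zL k \<and> e - T (step k e) \<in> zL (Suc k)" if "1 \<le> k" "e \<in> zL k" for k e
    unfolding step_def using someI_ex[OF graded[OF that, unfolded Bex_def]] .
  define e where "e = rec_nat y (\<lambda>n en. en - T (step (Suc n) en))"
  define u where "u n = step (Suc n) (e n)" for n
  have e_0: "e 0 = y" and e_Suc: "e (Suc n) = e n - T (u n)" for n
    by (simp_all add: e_def u_def)
  have e_zL: "e n \<in> zL (Suc n)" for n
    by (induction n) (use y step in \<open>simp_all add: e_0 e_Suc u_def\<close>)
  have u_zL: "u n \<in> zL (Suc n)" for n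
    using step[OF _ e_zL] by (simp add: u_def)
  obtain x where x: "\<And>m. x - (\<Sum>k<m. u k) \<in> zL m"
    using zL_complete[of u] u_zL zL_Suc_subset by blast
  have "x - u 0 \<in> zL 1" "u 0 \<in> zL 1"
    using x[of 1] u_zL[of 0] by simp_all
  then have x_zL: "x \<in> zL 1"
    using R.subspace_add[OF R_subspace_zL] by (metis diff_add_cancel)
  have telescope: "(\<Sum>k<m. T (u k)) = y - e m" for m
    by (induction m) (simp_all add: e_0 e_Suc)
  have "T x - y = T (x - (\<Sum>k<m. u k)) - e m" for m
    by (simp add: additive.diff[OF T] additive.sum[OF T] telescope)
  moreover have "T (x - (\<Sum>k<m. u k)) \<in> zL m" "e m \<in> zL m" for m
    using T_zL x e_zL zL_Suc_subset by blast+
  ultimately have "T x - y \<in> zL m" for m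
    using R.subspace_diff[OF R_subspace_zL] by metis
  then have "T x = y"
    using zL_separated[of "T x - y"] by simp
  then show "y \<in> T ` zL 1"
    using x_zL by blast
qed

end

section \<open>Polynomials in the semilinear operator xi\<close>

locale qdiff_lattice = fg_lattice scale G L
  for scale :: "complex fls \<Rightarrow> 'v::ab_group_add \<Rightarrow> 'v" and G L +
  fixes q :: complex and xi :: "'v \<Rightarrow> 'v"
  assumes q_nz: "q \<noteq> 0"
    and xi_add: "xi (x + y) = xi x + xi y"
    and xi_scale: "xi (scale f v) = scale (fls_qsubst q f) (xi v)"
    and xi_L: "xi ` L \<subseteq> L"
begin

sublocale xi: additive xi
  by unfold_locales (rule xi_add)

declare xi.zero [simp]

lemma xi_cscale: "xi (cscale scale c v) = cscale scale c (xi v)"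
  by (simp add: xi_scale)

lemma xi_scale_X_power: "xi (scale (fls_X ^ k) v) = cscale scale (q ^ k) (scale (fls_X ^ k) (xi v))"
  by (simp add: xi_scale vs.scale_scale)

lemma xi_zL: "xi ` zL k \<subseteq> zL k"
proof
  fix x assume "x \<in> xi ` zL k"
  then obtain y where y: "y \<in> L" "x = xi (scale (fls_X ^ k) y)"
    by (auto simp: zL_def)
  then have "x = scale (fls_X ^ k) (cscale scale (q ^ k) (xi y))"
    by (simp add: xi_scale_X_power vs.scale_scale mult.commute)
  moreover have "cscale scale (q ^ k) (xi y) \<in> L"
    using C.subspace_scale[OF C_subspace_L] xi_L y(1) by auto
  ultimately show "x \<in> zL k"
    unfolding zL_def by blast
qed

definition poly_xi :: "complex poly \<Rightarrow> 'v \<Rightarrow> 'v" where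
  "poly_xi p x = (\<Sum>i\<le>degree p. cscale scale (coeff p i) ((xi ^^ i) x))"

lemma poly_xi_eq_sum_upto:
  "degree p \<le> n \<Longrightarrow> poly_xi p x = (\<Sum>i\<le>n. cscale scale (coeff p i) ((xi ^^ i) x))"
  unfolding poly_xi_def by (rule sum.mono_neutral_left) (auto simp: coeff_eq_0)

lemma poly_xi_0 [simp]: "poly_xi 0 x = 0"
  by (simp add: poly_xi_def)

lemma poly_xi_pCons: "poly_xi (pCons a p) x = cscale scale a x + xi (poly_xi p x)"
proof -
  have "poly_xi (pCons a p) x
      = (\<Sum>i\<le>Suc (degree p). cscale scale (coeff (pCons a p) i) ((xi ^^ i) x))"
    by (rule poly_xi_eq_sum_upto[OF degree_pCons_le])
  also have "\<dots> = cscale scale a x + (\<Sum>i\<le>degree p. cscale scale (coeff p i) (xi ((xi ^^ i) x)))"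
    by (simp only: sum.atMost_Suc_shift coeff_pCons_0 coeff_pCons_Suc) simp
  also have "(\<Sum>i\<le>degree p. cscale scale (coeff p i) (xi ((xi ^^ i) x))) = xi (poly_xi p x)"
    by (simp add: poly_xi_def xi.sum xi_cscale)
  finally show ?thesis .
qed

lemma poly_xi_const: "poly_xi [:a:] x = cscale scale a x"
  by (simp add: poly_xi_pCons)

lemma poly_xi_linear: "poly_xi [:-a, 1:] x = xi x - cscale scale a x"
  by (simp add: poly_xi_pCons vs.scale_minus_left)

lemma additive_poly_xi: "additive (poly_xi p)"
proof
  show "poly_xi p (x + y) = poly_xi p x + poly_xi p y" for x y
    by (induction p rule: pCons_induct)
      (simp_all add: poly_xi_pCons xi_add vs.scale_right_distrib algebra_simps)
qed

lemma poly_xi_cscale: "poly_xi p (cscale scale c x) = cscale scale c (poly_xi p x)"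
  by (induction p rule: pCons_induct)
    (simp_all add: poly_xi_pCons xi_add xi_cscale vs.scale_right_distrib vs.scale_scale mult.commute)

lemma poly_xi_commute: "xi (poly_xi p x) = poly_xi p (xi x)"
  by (induction p rule: pCons_induct) (simp_all add: poly_xi_pCons xi_add xi_cscale)

lemma poly_xi_add: "poly_xi (p + r) x = poly_xi p x + poly_xi r x"
proof -
  define n where "n = max (degree p) (degree r)"
  have "poly_xi (p + r) x = (\<Sum>i\<le>n. cscale scale (coeff (p + r) i) ((xi ^^ i) x))"
    by (rule poly_xi_eq_sum_upto) (simp add: n_def degree_add_le)
  also have "\<dots> = poly_xi p x + poly_xi r x"
    by (simp add: poly_xi_eq_sum_upto[of _ n] n_def fls_const_add vs.scale_left_distrib sum.distrib)
  finally show ?thesis .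
qed

lemma poly_xi_smult: "poly_xi (smult c p) x = cscale scale c (poly_xi p x)"
  by (simp add: poly_xi_eq_sum_upto[OF degree_smult_le] poly_xi_def vs.scale_sum_right vs.scale_scale)

lemma poly_xi_mult: "poly_xi (p * r) x = poly_xi p (poly_xi r x)"
  by (induction p rule: pCons_induct) (simp_all add: poly_xi_add poly_xi_smult poly_xi_pCons)

lemma poly_xi_monom: "poly_xi (monom a i) x = cscale scale a ((xi ^^ i) x)"
  by (induction i) (simp_all add: monom_0 monom_Suc poly_xi_pCons poly_xi_const xi_cscale)

lemma poly_xi_sum: "poly_xi (\<Sum>i\<in>I. p i) x = (\<Sum>i\<in>I. poly_xi (p i) x)"
  by (induction I rule: infinite_finite_induct) (simp_all add: poly_xi_add)

lemma poly_xi_mem: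
  assumes "C.subspace S" "xi ` S \<subseteq> S" "x \<in> S"
  shows "poly_xi p x \<in> S"
  by (induction p rule: pCons_induct)
    (use assms in \<open>auto simp: poly_xi_pCons C.subspace_0 intro!: C.subspace_add C.subspace_scale\<close>)

lemma poly_xi_L: "x \<in> L \<Longrightarrow> poly_xi p x \<in> L"
  using poly_xi_mem[OF C_subspace_L xi_L] .

lemma poly_xi_zL: "x \<in> zL k \<Longrightarrow> poly_xi p x \<in> zL k"
  using poly_xi_mem[OF C_subspace_zL xi_zL] .

lemma exists_poly_xi_mem_zL:
  assumes x: "x \<in> L"
  shows "\<exists>p. p \<noteq> 0 \<and> poly_xi p x \<in> zL 1"
proof -
  define n where "n = card G"
  have "\<exists>w\<in>C.span G. (xi ^^ i) x - w \<in> zL 1" for i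
    using poly_xi_L[OF x, of "monom 1 i"] by (intro L_mod_zL_in_C_span) (simp add: poly_xi_monom)
  then obtain w where w: "\<And>i. w i \<in> C.span G" "\<And>i. (xi ^^ i) x - w i \<in> zL 1"
    by metis
  obtain c where c: "\<exists>i\<in>{..n}. c i \<noteq> 0" "(\<Sum>i\<le>n. cscale scale (c i) (w i)) = 0"
    using C.nontrivial_linear_relation[OF finite_G, of "{..n}" w] w(1) by (auto simp: n_def)
  define p where "p = (\<Sum>i\<le>n. monom (c i) i)"
  have "coeff p i = c i" if "i \<le> n" for i
    using that by (simp add: p_def coeff_sum)
  then have "p \<noteq> 0"
    using c(1) by (metis atMost_iff coeff_0)
  have "poly_xi p x = (\<Sum>i\<le>n. cscale scale (c i) ((xi ^^ i) x - w i)) + (\<Sum>i\<le>n. cscale scale (c i) (w i))"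
    by (simp add: p_def poly_xi_sum poly_xi_monom C.scale_right_diff_distrib sum_subtractf)
  also have "\<dots> \<in> zL 1"
    using c(2) w(2) by (simp add: C.subspace_sum[OF C_subspace_zL] C.subspace_scale[OF C_subspace_zL])
  finally show ?thesis
    using \<open>p \<noteq> 0\<close> by blast
qed

lemma exists_annihilating_poly: "\<exists>p. p \<noteq> 0 \<and> (\<forall>x\<in>L. poly_xi p x \<in> zL 1)"
proof -
  have G_L: "G \<subseteq> L"
    by (simp add: L_eq_span R.span_superset)
  obtain pg where pg: "\<And>g. g \<in> G \<Longrightarrow> pg g \<noteq> 0 \<and> poly_xi (pg g) g \<in> zL 1"
    using exists_poly_xi_mem_zL G_L by (metis subsetD)
  define p where "p = (\<Prod>g\<in>G. pg g)"
  have "p \<noteq> 0"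
    using pg finite_G by (simp add: p_def)
  define S where "S = {x. poly_xi p x \<in> zL 1}"
  have "C.subspace S"
    using additive.add[OF additive_poly_xi] additive.zero[OF additive_poly_xi] C_subspace_zL
    by (auto simp: S_def C.subspace_def poly_xi_cscale)
  moreover have "G \<subseteq> S"
  proof
    fix g assume g: "g \<in> G"
    have "p = (\<Prod>h\<in>G - {g}. pg h) * pg g"
      using g finite_G by (simp add: p_def prod.remove mult.commute)
    then show "g \<in> S"
      using pg[OF g] poly_xi_zL by (simp add: S_def poly_xi_mult)
  qed
  ultimately have span_S: "C.span G \<subseteq> S"
    by (rule C.span_minimal[rotated])
  have "poly_xi p x \<in> zL 1" if x: "x \<in> L" for x
  proof -
    obtain w where w: "w \<in> C.span G" "x - w \<in> zL 1"
      using L_mod_zL_in_C_span[OF x] by blast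
    have "poly_xi p x = poly_xi p (x - w) + poly_xi p w"
      by (simp add: additive.diff[OF additive_poly_xi])
    then show ?thesis
      using poly_xi_zL[OF w(2)] span_S w(1) C.subspace_add[OF C_subspace_zL] by (auto simp: S_def)
  qed
  then show ?thesis
    using \<open>p \<noteq> 0\<close> by blast
qed

lemma not_quot_eigenvalueD:
  "\<not> quot_eigenvalue scale xi L L \<beta> \<Longrightarrow> w \<in> L \<Longrightarrow> poly_xi [:-\<beta>, 1:] w \<in> zL 1 \<Longrightarrow> w \<in> zL 1"
  by (auto simp: quot_eigenvalue_def zmul_eq_zL poly_xi_linear)

lemma surj_mod_zL_if_not_quot_eigenvalue:
  assumes \<beta>: "\<not> quot_eigenvalue scale xi L L \<beta>" and y: "y \<in> L"
  shows "\<exists>v\<in>L. y - poly_xi [:-\<beta>, 1:] v \<in> zL 1"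
proof -
  \<comment> \<open>Write the annihilator as \<open>(x - \<beta>)^m h\<close> with \<open>h(\<beta>) \<noteq> 0\<close>: injectivity cancels \<open>(x - \<beta>)^m\<close>,
    and \<open>h = (x - \<beta>) d + h(\<beta>)\<close> then inverts \<open>xi - \<beta>\<close> modulo \<open>zL\<close>.\<close>
  obtain p where p: "p \<noteq> 0" "\<And>x. x \<in> L \<Longrightarrow> poly_xi p x \<in> zL 1"
    using exists_annihilating_poly by blast
  obtain h where h: "p = [:-\<beta>, 1:] ^ order \<beta> p * h" "\<not> [:-\<beta>, 1:] dvd h"
    using order_decomp[OF p(1)] by blast
  have cancel: "u \<in> zL 1" if "u \<in> L" "poly_xi ([:-\<beta>, 1:] ^ m) u \<in> zL 1" for m u
    using that
  proof (induction m arbitrary: u)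
    case (Suc m)
    have "poly_xi [:-\<beta>, 1:] (poly_xi ([:-\<beta>, 1:] ^ m) u) \<in> zL 1"
      using Suc.prems(2) by (simp only: power_Suc poly_xi_mult)
    then have "poly_xi ([:-\<beta>, 1:] ^ m) u \<in> zL 1"
      by (rule not_quot_eigenvalueD[OF \<beta> poly_xi_L[OF Suc.prems(1)]])
    then show ?case
      by (rule Suc.IH[OF Suc.prems(1)])
  qed (simp add: poly_xi_const flip: pCons_one)
  have h_L: "poly_xi h x \<in> zL 1" if "x \<in> L" for x
    using cancel[OF poly_xi_L[OF that]] p(2)[OF that] h(1) by (metis poly_xi_mult)
  define c where "c = poly h \<beta>"
  have "c \<noteq> 0"
    using h(2) by (simp add: c_def poly_eq_0_iff_dvd)
  define d where "d = synthetic_div h \<beta>"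
  define v where "v = cscale scale (- 1 / c) (poly_xi d y)"
  have "poly_xi h y = poly_xi ([:-\<beta>, 1:] * d + [:c:]) y"
    unfolding c_def d_def synthetic_div_correct' ..
  then have "poly_xi h y = poly_xi [:-\<beta>, 1:] (poly_xi d y) + cscale scale c y"
    by (simp only: poly_xi_add poly_xi_mult poly_xi_const)
  moreover have "poly_xi [:-\<beta>, 1:] v = cscale scale (- 1 / c) (poly_xi [:-\<beta>, 1:] (poly_xi d y))"
    by (simp only: v_def poly_xi_cscale)
  ultimately have "y - poly_xi [:-\<beta>, 1:] v = cscale scale (1 / c) (poly_xi h y)"
    using \<open>c \<noteq> 0\<close>
    by (simp add: vs.scale_right_distrib vs.scale_scale vs.scale_minus_left)
  also have "\<dots> \<in> zL 1"
    using h_L[OF y] by (rule C.subspace_scale[OF C_subspace_zL])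
  finally show ?thesis
    using C.subspace_scale[OF C_subspace_L poly_xi_L[OF y]] unfolding v_def by blast
qed

section \<open>Bijectivity on zL\<close>

lemma poly_xi_linear_scale_X_power:
  "poly_xi [:-\<alpha>, 1:] (scale (fls_X ^ k) w)
     = scale (fls_X ^ k) (cscale scale (q ^ k) (poly_xi [:-(\<alpha> / q ^ k), 1:] w))"
  using q_nz
  by (simp add: poly_xi_linear xi_scale_X_power vs.scale_right_diff_distrib vs.scale_scale mult.commute)

lemma graded_inj_on_linear:
  assumes \<alpha>: "\<not> quot_eigenvalue scale xi L L (\<alpha> / q ^ k)"
    and u: "u \<in> zL k" "poly_xi [:-\<alpha>, 1:] u \<in> zL (Suc k)"
  shows "u \<in> zL (Suc k)"
proof -
  obtain w where w: "w \<in> L" "u = scale (fls_X ^ k) w"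
    using u(1) by (auto simp: zL_def)
  have "cscale scale (q ^ k) (poly_xi [:-(\<alpha> / q ^ k), 1:] w) \<in> zL 1"
    using u(2) unfolding w(2) poly_xi_linear_scale_X_power Suc_eq_plus1 scale_X_power_mem_zL_iff .
  then have "cscale scale (1 / q ^ k) (cscale scale (q ^ k) (poly_xi [:-(\<alpha> / q ^ k), 1:] w)) \<in> zL 1"
    by (rule C.subspace_scale[OF C_subspace_zL])
  then have "poly_xi [:-(\<alpha> / q ^ k), 1:] w \<in> zL 1"
    using q_nz by (simp add: vs.scale_scale)
  then have "w \<in> zL 1"
    by (rule not_quot_eigenvalueD[OF \<alpha> w(1)])
  then show ?thesis
    unfolding w(2) Suc_eq_plus1 scale_X_power_mem_zL_iff .
qed

lemma graded_surj_on_linear: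
  assumes \<alpha>: "\<not> quot_eigenvalue scale xi L L (\<alpha> / q ^ k)"
    and e: "e \<in> zL k"
  shows "\<exists>u\<in>zL k. e - poly_xi [:-\<alpha>, 1:] u \<in> zL (Suc k)"
proof -
  obtain w where w: "w \<in> L" "e = scale (fls_X ^ k) w"
    using e by (auto simp: zL_def)
  obtain v where v: "v \<in> L" "cscale scale (1 / q ^ k) w - poly_xi [:-(\<alpha> / q ^ k), 1:] v \<in> zL 1"
    using surj_mod_zL_if_not_quot_eigenvalue[OF \<alpha> C.subspace_scale[OF C_subspace_L w(1)]] by blast
  have "e - poly_xi [:-\<alpha>, 1:] (scale (fls_X ^ k) v)
      = scale (fls_X ^ k) (cscale scale (q ^ k)
          (cscale scale (1 / q ^ k) w - poly_xi [:-(\<alpha> / q ^ k), 1:] v))"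
    using q_nz
    by (simp add: w(2) poly_xi_linear_scale_X_power vs.scale_right_diff_distrib vs.scale_scale)
  also have "\<dots> \<in> zL (Suc k)"
    unfolding Suc_eq_plus1 scale_X_power_mem_zL_iff by (rule C.subspace_scale[OF C_subspace_zL v(2)])
  finally show ?thesis
    using v(1) by (auto simp: zL_def)
qed

definition nonresonant :: "complex \<Rightarrow> bool" where
  "nonresonant \<alpha> \<longleftrightarrow> (\<forall>k\<ge>1. \<not> quot_eigenvalue scale xi L L (\<alpha> / q ^ k))"

lemma nonresonantI:
  assumes "\<And>n::int. n < 0 \<Longrightarrow> \<not> quot_eigenvalue scale xi L L (q powi n * \<alpha>)"
  shows "nonresonant \<alpha>"
  unfolding nonresonant_def
proof (intro allI impI)
  fix k :: nat assume "1 \<le> k"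
  then have "\<not> quot_eigenvalue scale xi L L (q powi (- int k) * \<alpha>)"
    by (intro assms) simp
  then show "\<not> quot_eigenvalue scale xi L L (\<alpha> / q ^ k)"
    by (simp add: power_int_minus field_simps)
qed

lemma bij_betw_poly_xi_linear:
  assumes "nonresonant \<alpha>"
  shows "bij_betw (poly_xi [:-\<alpha>, 1:]) (zL 1) (zL 1)"
proof -
  have "inj_on (poly_xi [:-\<alpha>, 1:]) (zL 1)"
    using assms graded_inj_on_linear
    by (intro inj_on_zL_if_graded_inj[OF additive_poly_xi]) (auto simp: nonresonant_def)
  moreover have "zL 1 \<subseteq> poly_xi [:-\<alpha>, 1:] ` zL 1"
    using assms graded_surj_on_linear poly_xi_zL
    by (intro zL_subset_image_if_graded_surj[OF additive_poly_xi]) (auto simp: nonresonant_def)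
  ultimately show ?thesis
    using poly_xi_zL by (auto simp: bij_betw_def)
qed

lemma bij_betw_poly_xi:
  assumes "p \<noteq> 0" "\<And>a. poly p a = 0 \<Longrightarrow> nonresonant a"
  shows "bij_betw (poly_xi p) (zL 1) (zL 1)"
  using assms
proof (induction "degree p" arbitrary: p rule: less_induct)
  case less
  show ?case
  proof (cases "degree p = 0")
    case True
    then obtain c where c: "p = [:c:]" "c \<noteq> 0"
      using less.prems(1) by (metis degree_eq_zeroE pCons_0_0)
    show ?thesis
    proof (rule bij_betwI[where g = "cscale scale (1 / c)"])
      show "poly_xi p \<in> zL 1 \<rightarrow> zL 1" "cscale scale (1 / c) \<in> zL 1 \<rightarrow> zL 1"
        using poly_xi_zL C.subspace_scale[OF C_subspace_zL] by auto
    qed (use c in \<open>simp_all add: poly_xi_const vs.scale_scale\<close>)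
  next
    case False
    then obtain a where a: "poly p a = 0"
      using fundamental_theorem_of_algebra[of p] constant_degree[of p] by metis
    then obtain p' where p': "p = [:-a, 1:] * p'"
      by (metis dvdE poly_eq_0_iff_dvd)
    with less.prems have "p' \<noteq> 0" "\<And>b. poly p' b = 0 \<Longrightarrow> nonresonant b"
      by auto
    moreover have "degree p' < degree p"
      using degree_mult_eq[of "[:-a, 1:]" p'] p' \<open>p' \<noteq> 0\<close> by simp
    ultimately have "bij_betw (poly_xi p') (zL 1) (zL 1)"
      using less.hyps by blast
    then have "bij_betw (poly_xi [:-a, 1:] \<circ> poly_xi p') (zL 1) (zL 1)"
      using bij_betw_poly_xi_linear[OF less.prems(2)[OF a]] by (rule bij_betw_trans)
    moreover have "poly_xi p = poly_xi [:-a, 1:] \<circ> poly_xi p'"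
      by (rule ext) (simp only: p' poly_xi_mult comp_def)
    ultimately show ?thesis
      by simp
  qed
qed

lemma exists_poly_with_eigenvalue_roots:
  assumes P: "C.subspace P" "xi ` P \<subseteq> P" "P \<subseteq> L"
  shows "\<exists>f. f \<noteq> 0 \<and> (\<forall>x\<in>P. poly_xi f x \<in> zL 1) \<and>
             (\<forall>a. poly f a = 0 \<longrightarrow> quot_eigenvalue scale xi L P a)"
proof -
  define annihilates where "annihilates f \<longleftrightarrow> f \<noteq> 0 \<and> (\<forall>x\<in>P. poly_xi f x \<in> zL 1)" for f
  obtain p where "annihilates p"
    using exists_annihilating_poly P(3) by (auto simp: annihilates_def)
  then obtain f where f: "annihilates f" and min: "\<And>g. annihilates g \<Longrightarrow> degree f \<le> degree g"
    using ex_has_least_nat[of annihilates p degree] by blast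
  have "quot_eigenvalue scale xi L P a" if a: "poly f a = 0" for a
  proof (rule ccontr)
    assume not_eigen: "\<not> quot_eigenvalue scale xi L P a"
    obtain f' where f': "f = [:-a, 1:] * f'"
      using a by (metis dvdE poly_eq_0_iff_dvd)
    have "f' \<noteq> 0"
      using f f' by (auto simp: annihilates_def)
    have "poly_xi f' x \<in> zL 1" if x: "x \<in> P" for x
    proof -
      have "poly_xi [:-a, 1:] (poly_xi f' x) \<in> zL 1"
        using f x unfolding annihilates_def f' by (simp only: poly_xi_mult)
      moreover have "poly_xi f' x \<in> P"
        using poly_xi_mem[OF P(1,2) x] .
      ultimately show ?thesis
        using not_eigen by (auto simp: quot_eigenvalue_def zmul_eq_zL poly_xi_linear)
    qed
    then have "degree f \<le> degree f'"
      using min \<open>f' \<noteq> 0\<close> by (simp add: annihilates_def)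
    then show False
      using degree_mult_eq[of "[:-a, 1:]" f'] f' \<open>f' \<noteq> 0\<close> by simp
  qed
  then show ?thesis
    using f by (auto simp: annihilates_def)
qed

lemma equivariant_lifting_exists:
  assumes P: "C.subspace P" "xi ` P \<subseteq> P" "P \<subseteq> L"
    and f_P: "\<And>x. x \<in> P \<Longrightarrow> poly_xi f x \<in> zL 1"
    and f_bij: "bij_betw (poly_xi f) (zL 1) (zL 1)"
  shows "\<exists>s :: 'v \<Rightarrow> 'v.
           (\<forall>x\<in>P. s x \<in> L) \<and>
           (\<forall>x\<in>P. x - s x \<in> zL 1) \<and>
           (\<forall>x\<in>P. \<forall>y\<in>P. x - y \<in> zL 1 \<longrightarrow> s x = s y) \<and>
           (\<forall>x\<in>P. \<forall>y\<in>P. s (x + y) = s x + s y) \<and>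
           (\<forall>c. \<forall>x\<in>P. s (cscale scale c x) = cscale scale c (s x)) \<and>
           (\<forall>x\<in>P. s (xi x) = xi (s x))"
proof -
  let ?F = "poly_xi f"
  define Y where "Y x = inv_into (zL 1) ?F (?F x)" for x
  have Y: "Y x \<in> zL 1" "?F (Y x) = ?F x" if "x \<in> P" for x
    using f_P[OF that] f_bij
    by (auto simp: Y_def bij_betw_def inv_into_into f_inv_into_f)
  have Y_eq: "Y x = y" if "y \<in> zL 1" "?F y = ?F x" for x y
    using that f_bij by (auto simp: Y_def bij_betw_def inv_into_f_f simp flip: that(2))
  have F_add: "?F (x + y) = ?F x + ?F y" and F_diff: "?F (x - y) = ?F x - ?F y" for x y
    using additive.add[OF additive_poly_xi] additive.diff[OF additive_poly_xi] by blast+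
  note zL_add = C.subspace_add[OF C_subspace_zL]
  define s where "s x = x - Y x" for x
  have "\<forall>x\<in>P. s x \<in> L"
    using Y(1) P(3) zL_subset_L[of 1] C.subspace_diff[OF C_subspace_L] unfolding s_def by blast
  moreover have "\<forall>x\<in>P. x - s x \<in> zL 1"
    using Y(1) by (simp add: s_def)
  moreover have "s x = s y" if "x \<in> P" "y \<in> P" "x - y \<in> zL 1" for x y
  proof -
    have "Y x = Y y + (x - y)"
      using Y[OF that(2)] that(3) by (intro Y_eq) (simp_all add: zL_add F_add F_diff)
    then show ?thesis
      by (simp add: s_def)
  qed
  moreover have "s (x + y) = s x + s y" if "x \<in> P" "y \<in> P" for x y
  proof -
    have "Y (x + y) = Y x + Y y"
      using Y[OF that(1)] Y[OF that(2)] by (intro Y_eq) (simp_all add: zL_add F_add)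
    then show ?thesis
      by (simp add: s_def)
  qed
  moreover have "s (cscale scale c x) = cscale scale c (s x)" if "x \<in> P" for c x
  proof -
    have "Y (cscale scale c x) = cscale scale c (Y x)"
      using Y[OF that] by (intro Y_eq) (simp_all add: C.subspace_scale[OF C_subspace_zL] poly_xi_cscale)
    then show ?thesis
      by (simp add: s_def vs.scale_right_diff_distrib)
  qed
  moreover have "s (xi x) = xi (s x)" if "x \<in> P" for x
  proof -
    have "Y (xi x) = xi (Y x)"
      using Y[OF that] xi_zL by (intro Y_eq) (auto simp flip: poly_xi_commute)
    then show ?thesis
      by (simp add: s_def xi.diff)
  qed
  ultimately show ?thesis
    by blast
qed

end

theorem lemma6:
  fixes q :: complex
    and scale :: "complex fls \<Rightarrow> 'v::ab_group_add \<Rightarrow> 'v"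
    and xi :: "'v \<Rightarrow> 'v"
    and L P :: "'v set"
  assumes q_nz: "q \<noteq> 0"
    and q_not_root: "\<forall>n::nat. n > 0 \<longrightarrow> q ^ n \<noteq> 1"
    and V: "qdiff_module q scale xi"
    and L: "R_lattice scale L"
    and L_inv: "xi ` L \<subseteq> L"
    and P_sub: "zmul scale L \<subseteq> P" "P \<subseteq> L"
    and P_add: "\<forall>x\<in>P. \<forall>y\<in>P. x + y \<in> P"
    and P_scale: "\<forall>c. \<forall>x\<in>P. cscale scale c x \<in> P"
    and P_inv: "xi ` P \<subseteq> P"
    and nonres: "\<forall>\<alpha> (n::int). quot_eigenvalue scale xi L P \<alpha> \<and> n \<noteq> 0 \<longrightarrow>
                   \<not> quot_eigenvalue scale xi L L (q powi n * \<alpha>)"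
  shows "\<exists>s :: 'v \<Rightarrow> 'v.
           (\<forall>x\<in>P. s x \<in> L) \<and>
           (\<forall>x\<in>P. x - s x \<in> zmul scale L) \<and>
           (\<forall>x\<in>P. \<forall>y\<in>P. x - y \<in> zmul scale L \<longrightarrow> s x = s y) \<and>
           (\<forall>x\<in>P. \<forall>y\<in>P. s (x + y) = s x + s y) \<and>
           (\<forall>c. \<forall>x\<in>P. s (cscale scale c x) = cscale scale c (s x)) \<and>
           (\<forall>x\<in>P. s (xi x) = xi (s x))"
proof -
  obtain G where G: "finite G" "L = {v. \<exists>r. v = (\<Sum>g\<in>G. scale (fps_to_fls (r g)) g)}"
    using L unfolding R_lattice_def by blast
  have "Vector_Spaces.vector_space scale"
    using V by (simp add: qdiff_module_def)
  then interpret qdiff_lattice scale G L q xi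
    using V q_nz G L_inv
    by (intro qdiff_lattice.intro fg_lattice.intro fg_lattice_axioms.intro qdiff_lattice_axioms.intro)
      (auto simp: qdiff_module_def)
  have P: "C.subspace P"
    using P_add P_scale P_sub(1) C.subspace_0[OF C_subspace_zL]
    by (auto simp: C.subspace_def zmul_eq_zL)
  obtain f where f: "f \<noteq> 0" "\<forall>x\<in>P. poly_xi f x \<in> zL 1"
    "\<forall>a. poly f a = 0 \<longrightarrow> quot_eigenvalue scale xi L P a"
    using exists_poly_with_eigenvalue_roots[OF P P_inv P_sub(2)] by blast
  have "nonresonant a" if "poly f a = 0" for a
    using nonres f(3) that by (intro nonresonantI) auto
  then have "bij_betw (poly_xi f) (zL 1) (zL 1)"
    using bij_betw_poly_xi f(1) by blast
  then show ?thesis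
    using equivariant_lifting_exists[OF P P_inv P_sub(2)] f(2) unfolding zmul_eq_zL by blast
qed

end
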